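(* Let $X$ be a real random variable and $U$ a continuously distributed random variable with $U\sim\mathrm{Unif}[0,1]$. Let $\mathcal{T}=[a,b]\subseteq[0,1]$. If $U$ is $\mathcal{T}$-independent of $X$, then $F_{X\mid U}(x\mid u)=F_X(x)$ for all $x\in\mathbb{R}$ and almost all $u\in\mathcal{T}$.
   Context: $U$ is $\mathcal{T}$-independent of $X$ if $F_{U\mid X}(\tau\mid x)=F_U(\tau)$ for all $x\in\operatorname{supp}(X)$ and all $\tau\in\mathcal{T}$. Here $F_{X\mid U}(\cdot\mid u)$ is the conditional cdf of $X$ given $U=u$ and $F_X$ is the marginal cdf of $X$. *)

theory Defs
  imports "HOL-Probability.Probability"
begin

definition dist_support :: "'w measure \<Rightarrow> ('w \<Rightarrow> real) \<Rightarrow> real set" where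
  "dist_support M Z = {x. \<forall>e>0. measure (distr M borel Z) (ball x e) > 0}"

text \<open>F is a (version of the) conditional cdf of Y given Z, i.e. F y z = P(Y \<le> y | Z = z):
  for every y, the map z \<mapsto> F y z is Borel measurable and integrable w.r.t. the law
  of Z, and for every Borel set B,
  P(Y \<le> y, Z \<in> B) = integral over B of F y z with respect to the law of Z.\<close>
definition is_cond_cdf ::
  "'w measure \<Rightarrow> ('w \<Rightarrow> real) \<Rightarrow> ('w \<Rightarrow> real) \<Rightarrow> (real \<Rightarrow> real \<Rightarrow> real) \<Rightarrow> bool" where
  "is_cond_cdf M Y Z F \<longleftrightarrow>
     (\<forall>y. F y \<in> borel_measurable borel \<and> integrable (distr M borel Z) (F y) \<and>
        (\<forall>B \<in> sets borel.
           measure M {\<omega> \<in> space M. Y \<omega> \<le> y \<and> Z \<omega> \<in> B}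
             = (\<integral>z. indicator B z * F y z \<partial>(distr M borel Z))))"

end

theory Submission imports Defs begin

text \<open>Fix x and let c = F_X(x). The support of the law of X has full measure, so the hypothesis
  gives P(X \<le> x, U \<le> \<tau>) = F_U(\<tau>) c for \<tau> in [a, b]. By the defining property of F_{X|U},
  the function g = 1_(a,b] (F_{X|U}(x | -) - c) then integrates to zero against the law of U over
  every half-line (t, \<infinity>). Half-lines generate the Borel sets, so g = 0 almost everywhere; for
  uniform U this is the claim, the endpoint a being a null set.\<close>

lemma AE_measure_ball_pos:
  fixes P :: "'a::{metric_space,second_countable_topology} measure"
  assumes sets_P: "sets P = sets borel" and "finite_measure P"
  shows "AE z in P. \<forall>e>0. measure P (ball z e) > 0"
proof -
  define \<F> where "\<F> = {ball x e | x e. e > 0 \<and> measure P (ball x e) = 0}"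
  obtain \<F>' where \<F>': "\<F>' \<subseteq> \<F>" "countable \<F>'" "\<Union>\<F>' = \<Union>\<F>"
    using Lindelof[of \<F>] unfolding \<F>_def by auto
  have "(\<Union>S\<in>\<F>'. S) \<in> null_sets P"
  proof (rule null_sets_UN')
    fix S assume "S \<in> \<F>'"
    then obtain x e where "S = ball x e" "measure P (ball x e) = 0"
      using \<F>' unfolding \<F>_def by auto
    then show "S \<in> null_sets P"
      using assms by (simp add: finite_measure.emeasure_eq_measure null_sets_def)
  qed (use \<F>' in auto)
  moreover have "{z \<in> space P. \<not> (\<forall>e>0. measure P (ball z e) > 0)} \<subseteq> \<Union>\<F>'"
  proof
    fix z assume "z \<in> {z \<in> space P. \<not> (\<forall>e>0. measure P (ball z e) > 0)}"
    then obtain e where "e > 0" "\<not> measure P (ball z e) > 0" by auto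
    then have "ball z e \<in> \<F>" unfolding \<F>_def using measure_nonneg[of P "ball z e"] by force
    then show "z \<in> \<Union>\<F>'" using \<F>'(3) \<open>e > 0\<close> by (metis UnionI centre_in_ball)
  qed
  ultimately show ?thesis by (intro AE_I') auto
qed

lemma AE_in_dist_support:
  assumes "finite_measure M" and "Z \<in> borel_measurable M"
  shows "AE z in distr M borel Z. z \<in> dist_support M Z"
  using AE_measure_ball_pos[of "distr M borel Z"] finite_measure.finite_measure_distr[OF assms]
  unfolding dist_support_def by simp

lemma emeasure_density_integrable:
  fixes f :: "'a \<Rightarrow> real"
  assumes f: "integrable N f" and A: "A \<in> sets N"
  shows "emeasure (density N (\<lambda>u. ennreal (f u))) A = ennreal (\<integral>u. indicator A u * max 0 (f u) \<partial>N)"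
proof -
  have "emeasure (density N (\<lambda>u. ennreal (f u))) A = (\<integral>\<^sup>+u. ennreal (f u) * indicator A u \<partial>N)"
    using f A by (simp add: emeasure_density)
  also have "\<dots> = (\<integral>\<^sup>+u. ennreal (indicator A u * max 0 (f u)) \<partial>N)"
    by (intro nn_integral_cong) (auto simp: indicator_def ennreal_neg max_def)
  also have "\<dots> = ennreal (\<integral>u. indicator A u * max 0 (f u) \<partial>N)"
    using integrable_mult_indicator[OF A integrable_max[OF f integrable_zero]]
    by (intro nn_integral_eq_integral) (auto simp: max.commute)
  finally show ?thesis .
qed

lemma AE_zero_if_tail_integrals_zero:
  fixes N :: "real measure" and g :: "real \<Rightarrow> real"
  assumes sets_N: "sets N = sets borel" and g_int: "integrable N g"
    and tails: "\<And>t. (\<integral>u. indicator {t<..} u * g u \<partial>N) = 0"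
  shows "AE u in N. g u = 0"
proof -
  \<comment> \<open>\<open>ennreal\<close> truncates at 0, so these are the measures with densities \<open>g\<^sup>+\<close> and \<open>g\<^sup>-\<close>.\<close>
  let ?pos = "density N (\<lambda>u. ennreal (g u))" and ?neg = "density N (\<lambda>u. ennreal (- g u))"
  have neg_g: "integrable N (\<lambda>u. - g u)" using g_int by auto
  have "?pos = ?neg"
  proof (rule measure_eqI_lessThan)
    fix t
    have tail: "{t<..} \<in> sets N" using sets_N by simp
    show "emeasure ?pos {t<..} < \<infinity>"
      using emeasure_density_integrable[OF g_int tail] by simp
    have parts: "integrable N (\<lambda>u. indicator {t<..} u * max 0 (h u))" if "integrable N h" for h :: "real \<Rightarrow> real"
      using integrable_mult_indicator[OF tail integrable_max[OF that integrable_zero]]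
      by (simp add: max.commute)
    have "(\<integral>u. indicator {t<..} u * max 0 (g u) \<partial>N) - (\<integral>u. indicator {t<..} u * max 0 (- g u) \<partial>N)
        = (\<integral>u. indicator {t<..} u * max 0 (g u) - indicator {t<..} u * max 0 (- g u) \<partial>N)"
      using parts[OF g_int] parts[OF neg_g] by (rule Bochner_Integration.integral_diff[symmetric])
    also have "\<dots> = (\<integral>u. indicator {t<..} u * g u \<partial>N)"
      by (intro Bochner_Integration.integral_cong) (auto simp: indicator_def max_def)
    finally have "(\<integral>u. indicator {t<..} u * max 0 (g u) \<partial>N) = (\<integral>u. indicator {t<..} u * max 0 (- g u) \<partial>N)"
      using tails[of t] by simp
    then show "emeasure ?pos {t<..} = emeasure ?neg {t<..}"
      using emeasure_density_integrable[OF g_int tail]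
        emeasure_density_integrable[OF neg_g tail] by simp
  qed (use sets_N in simp_all)
  moreover have "integral\<^sup>N N (\<lambda>u. ennreal (g u)) \<noteq> \<infinity>"
    using emeasure_density_integrable[OF g_int sets.top] g_int by (simp add: emeasure_density)
  ultimately have "AE u in N. ennreal (g u) = ennreal (- g u)"
    using finite_density_unique[of "\<lambda>u. ennreal (g u)" N "\<lambda>u. ennreal (- g u)"] g_int by auto
  then show ?thesis
    by (rule eventually_mono) (metis ennreal_eq_0_iff ennreal_inj linorder_le_cases neg_0_le_iff_le neg_le_0_iff_le)
qed

lemma
  assumes "is_cond_cdf M Y Z F"
  shows is_cond_cdf_borel_measurable[measurable]: "F y \<in> borel_measurable borel"
    and is_cond_cdf_integrable: "integrable (distr M borel Z) (F y)"
    and is_cond_cdf_measure_eq: "B \<in> sets borel \<Longrightarrow>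
      measure M {\<omega> \<in> space M. Y \<omega> \<le> y \<and> Z \<omega> \<in> B} = (\<integral>z. indicator B z * F y z \<partial>distr M borel Z)"
  using assms unfolding is_cond_cdf_def by blast+

lemma joint_cdf_eq_mult_if_cond_cdf_const:
  assumes M: "finite_measure M" and X: "X \<in> borel_measurable M"
    and F: "is_cond_cdf M U X F"
    and const: "\<forall>z \<in> dist_support M X. F \<tau> z = p"
  shows "measure M {\<omega> \<in> space M. X \<omega> \<le> x \<and> U \<omega> \<le> \<tau>} = p * cdf (distr M borel X) x"
proof -
  note is_cond_cdf_borel_measurable[OF F, measurable]
  have "measure M {\<omega> \<in> space M. X \<omega> \<le> x \<and> U \<omega> \<le> \<tau>}
      = measure M {\<omega> \<in> space M. U \<omega> \<le> \<tau> \<and> X \<omega> \<in> {..x}}"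
    by (intro arg_cong[where f = "measure M"]) auto
  also have "\<dots> = (\<integral>z. indicator {..x} z * F \<tau> z \<partial>distr M borel X)"
    using is_cond_cdf_measure_eq[OF F, where B = "{..x}"] by simp
  also have "\<dots> = (\<integral>z. indicator {..x} z * p \<partial>distr M borel X)"
    using AE_in_dist_support[OF M X]
    by (intro integral_cong_AE) (auto elim!: eventually_mono simp: const)
  also have "\<dots> = p * cdf (distr M borel X) x"
    by (simp add: cdf_def)
  finally show ?thesis .
qed

lemma integral_cond_cdf_Ioc_eq_0_if_joint_cdf_mult:
  assumes M: "finite_measure M"
    and X[measurable]: "X \<in> borel_measurable M" and U[measurable]: "U \<in> borel_measurable M"
    and F: "is_cond_cdf M X U F" and "s \<le> b"
    and joint_s: "measure M {\<omega> \<in> space M. X \<omega> \<le> x \<and> U \<omega> \<le> s} = cdf (distr M borel U) s * c"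
    and joint_b: "measure M {\<omega> \<in> space M. X \<omega> \<le> x \<and> U \<omega> \<le> b} = cdf (distr M borel U) b * c"
  shows "(\<integral>u. indicator {s<..b} u * (F x u - c) \<partial>distr M borel U) = 0"
proof -
  let ?PU = "distr M borel U"
  interpret PU: finite_measure ?PU
    using finite_measure.finite_measure_distr[OF M U] .
  have "(\<integral>u. indicator {s<..b} u * F x u \<partial>?PU)
      = measure M {\<omega> \<in> space M. X \<omega> \<le> x \<and> U \<omega> \<in> {s<..b}}"
    using is_cond_cdf_measure_eq[OF F, where B = "{s<..b}"] by simp
  also have "{\<omega> \<in> space M. X \<omega> \<le> x \<and> U \<omega> \<in> {s<..b}} =
      {\<omega> \<in> space M. X \<omega> \<le> x \<and> U \<omega> \<le> b} - {\<omega> \<in> space M. X \<omega> \<le> x \<and> U \<omega> \<le> s}"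
    by auto
  also have "measure M \<dots> = measure M {\<omega> \<in> space M. X \<omega> \<le> x \<and> U \<omega> \<le> b}
      - measure M {\<omega> \<in> space M. X \<omega> \<le> x \<and> U \<omega> \<le> s}"
    using \<open>s \<le> b\<close> by (intro finite_measure.finite_measure_Diff[OF M]) auto
  also have "\<dots> = (cdf ?PU b - cdf ?PU s) * c"
    using joint_s joint_b by (simp add: left_diff_distrib)
  also have "cdf ?PU b - cdf ?PU s = measure ?PU ({..b} - {..s})"
    using \<open>s \<le> b\<close> by (simp add: cdf_def PU.finite_measure_Diff)
  also have "{..b} - {..s} = {s<..b}"
    by auto
  finally have F_integral: "(\<integral>u. indicator {s<..b} u * F x u \<partial>?PU) = measure ?PU {s<..b} * c" .
  have "integrable ?PU (\<lambda>u. indicator {s<..b} u * F x u)"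
    using integrable_mult_indicator[OF _ is_cond_cdf_integrable[OF F], of "{s<..b}"] by simp
  moreover have "integrable ?PU (\<lambda>u. indicator {s<..b} u * c)"
    using integrable_mult_indicator[OF _ PU.integrable_const[of c], of "{s<..b}"] by simp
  ultimately show ?thesis
    using F_integral by (simp add: right_diff_distrib Bochner_Integration.integral_diff)
qed

lemma cond_cdf_AE_eq_if_joint_cdf_mult:
  assumes M: "finite_measure M"
    and X: "X \<in> borel_measurable M" and U: "U \<in> borel_measurable M"
    and F: "is_cond_cdf M X U F" and "a \<le> b"
    and joint: "\<And>\<tau>. \<tau> \<in> {a..b} \<Longrightarrow>
      measure M {\<omega> \<in> space M. X \<omega> \<le> x \<and> U \<omega> \<le> \<tau>} = cdf (distr M borel U) \<tau> * c"
  shows "AE u in distr M borel U. u \<in> {a<..b} \<longrightarrow> F x u = c"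
proof -
  let ?PU = "distr M borel U"
  interpret PU: finite_measure ?PU
    using finite_measure.finite_measure_distr[OF M U] .
  have "AE u in ?PU. indicator {a<..b} u * (F x u - c) = 0"
  proof (rule AE_zero_if_tail_integrals_zero)
    show "integrable ?PU (\<lambda>u. indicator {a<..b} u * (F x u - c))"
      using integrable_mult_indicator[OF _ Bochner_Integration.integrable_diff[OF
          is_cond_cdf_integrable[OF F] PU.integrable_const], of "{a<..b}"] by simp
    fix t
    define s where "s = min b (max a t)"
    have tail_cap: "{t<..} \<inter> {a<..b} = {s<..b}"
      using \<open>a \<le> b\<close> by (auto simp: s_def)
    have "indicator {t<..} u * (indicator {a<..b} u * (F x u - c)) = indicator {s<..b} u * (F x u - c)"
      for u :: real
      unfolding mult.assoc[symmetric] indicator_inter_arith[symmetric] tail_cap ..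
    then have "(\<integral>u. indicator {t<..} u * (indicator {a<..b} u * (F x u - c)) \<partial>?PU)
        = (\<integral>u. indicator {s<..b} u * (F x u - c) \<partial>?PU)"
      by (simp only:)
    also have "\<dots> = 0"
      using \<open>a \<le> b\<close> by (intro integral_cond_cdf_Ioc_eq_0_if_joint_cdf_mult[OF M X U F] joint)
        (auto simp: s_def)
    finally show "(\<integral>u. indicator {t<..} u * (indicator {a<..b} u * (F x u - c)) \<partial>?PU) = 0" .
  qed simp
  then show ?thesis
    by (rule eventually_mono) (simp add: indicator_def)
qed

theorem corollary8:
  fixes M :: "'w measure" and X U :: "'w \<Rightarrow> real"
    and F_UX F_XU :: "real \<Rightarrow> real \<Rightarrow> real" and a b :: real
  assumes "prob_space M"
    and "X \<in> borel_measurable M" and "U \<in> borel_measurable M"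
    and "distr M borel U = uniform_measure lborel {0..1}"
    and "0 \<le> a" and "a \<le> b" and "b \<le> 1"
    and "is_cond_cdf M U X F_UX"
    and "is_cond_cdf M X U F_XU"
    and "\<forall>x \<in> dist_support M X. \<forall>\<tau> \<in> {a..b}. F_UX \<tau> x = cdf (distr M borel U) \<tau>"
  shows "\<forall>x::real. AE u in lborel. u \<in> {a..b} \<longrightarrow> F_XU x u = cdf (distr M borel X) x"
proof
  fix x
  have M: "finite_measure M"
    using assms(1) by (rule prob_space.finite_measure)
  let ?PU = "distr M borel U" and ?c = "cdf (distr M borel X) x"
  have "measure M {\<omega> \<in> space M. X \<omega> \<le> x \<and> U \<omega> \<le> \<tau>} = cdf ?PU \<tau> * ?c" if "\<tau> \<in> {a..b}" for \<tau>
    using assms(10) that by (intro joint_cdf_eq_mult_if_cond_cdf_const[OF M assms(2,8)]) auto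
  then have "AE u in ?PU. u \<in> {a<..b} \<longrightarrow> F_XU x u = ?c"
    by (rule cond_cdf_AE_eq_if_joint_cdf_mult[OF M assms(2,3,9,6)])
  then have "AE u in lborel. u \<in> {0..1} \<longrightarrow> u \<in> {a<..b} \<longrightarrow> F_XU x u = ?c"
    unfolding assms(4) by (subst (asm) AE_uniform_measure) auto
  moreover have "AE u in lborel. u \<noteq> a"
    by (rule AE_lborel_singleton)
  ultimately show "AE u in lborel. u \<in> {a..b} \<longrightarrow> F_XU x u = ?c"
    by eventually_elim (use assms(5,7) in auto)
qed

end
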